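(* Let $Q$ be a subfield of $\mathbb{R}$, let $R = Q \times Q$ with coordinatewise addition and multiplication $(a,b)\cdot(c,d) = (ac, ad + bc)$, and consider the Frobenius template $(A(Q), C(Q), U(Q))$ in $R$, where $A(Q) = (Q \cap (0,\infty)) \times (Q \cap [0,\infty))$ and $C(Q) = U(Q) = (Q \cap [0,\infty))^2$. Let $n$ be a positive integer and let $(\alpha_1, \dots, \alpha_n)$ be a list of elements $\alpha_i = (a_i, b_i) \in A(Q)$ with $b_1 = 0$. Then $\mathrm{Frob}(\alpha_1, \dots, \alpha_n) = MN(\alpha_1, \dots, \alpha_n) = U(Q)$.
   Context: For a list $(\alpha_1,\dots,\alpha_n)$ in $A(Q)$, $MN(\alpha_1, \dots, \alpha_n) = \{\sum_{i=1}^n \alpha_i \lambda_i : \lambda_1, \dots, \lambda_n \in C(Q)\}$ (product in $R$), and $\mathrm{Frob}(\alpha_1, \dots, \alpha_n) = \{w \in R : w + U(Q) \subseteq MN(\alpha_1, \dots, \alpha_n)\}$, where $w + U(Q) = \{w + u : u \in U(Q)\}$. *)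

theory Defs
  imports Main "HOL.Real"
begin

definition real_subfield :: "real set \<Rightarrow> bool" where
  "real_subfield Q \<longleftrightarrow> 0 \<in> Q \<and> 1 \<in> Q \<and>
     (\<forall>x\<in>Q. \<forall>y\<in>Q. x + y \<in> Q \<and> x * y \<in> Q) \<and>
     (\<forall>x\<in>Q. - x \<in> Q) \<and> (\<forall>x\<in>Q. x \<noteq> 0 \<longrightarrow> inverse x \<in> Q)"

definition Rset :: "real set \<Rightarrow> (real \<times> real) set" where
  "Rset Q = Q \<times> Q"

definition radd :: "real \<times> real \<Rightarrow> real \<times> real \<Rightarrow> real \<times> real" where
  "radd x y = (fst x + fst y, snd x + snd y)"

definition rmul :: "real \<times> real \<Rightarrow> real \<times> real \<Rightarrow> real \<times> real" where
  "rmul x y = (fst x * fst y, fst x * snd y + snd x * fst y)"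

definition Aset :: "real set \<Rightarrow> (real \<times> real) set" where
  "Aset Q = {x \<in> Q. 0 < x} \<times> {x \<in> Q. 0 \<le> x}"

definition Cset :: "real set \<Rightarrow> (real \<times> real) set" where
  "Cset Q = {x \<in> Q. 0 \<le> x} \<times> {x \<in> Q. 0 \<le> x}"

definition Uset :: "real set \<Rightarrow> (real \<times> real) set" where
  "Uset Q = {x \<in> Q. 0 \<le> x} \<times> {x \<in> Q. 0 \<le> x}"

text \<open>MN(alpha_1,...,alpha_n) = { sum_i alpha_i lambda_i : lambda_i in C(Q) },
  the list alpha_1..alpha_n being given as a Isabelle list (indices 0..n-1).\<close>
definition MN :: "real set \<Rightarrow> (real \<times> real) list \<Rightarrow> (real \<times> real) set" where
  "MN Q as = {foldr radd (map (\<lambda>i. rmul (as ! i) (lam i)) [0..<length as]) (0, 0) | lam.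
                 \<forall>i < length as. lam i \<in> Cset Q}"

definition Frob :: "real set \<Rightarrow> (real \<times> real) list \<Rightarrow> (real \<times> real) set" where
  "Frob Q as = {w \<in> Rset Q. (\<lambda>u. radd w u) ` Uset Q \<subseteq> MN Q as}"

end

theory Submission
  imports Defs
begin

text \<open>\<open>U(Q)\<close> is a cone closed under the multiplication of \<open>R\<close>, so every \<open>Q\<close>-combination with
  coefficients in \<open>C(Q) = U(Q)\<close> of elements of \<open>A(Q) \<subseteq> U(Q)\<close> lies in \<open>U(Q)\<close>. Conversely,
  \<open>\<alpha>\<^sub>1 = (a, 0)\<close> with \<open>a > 0\<close> alone generates \<open>U(Q)\<close>, because \<open>(a, 0) \<cdot> (x/a, y/a) = (x, y)\<close>.
  Since \<open>U(Q)\<close> contains \<open>0\<close> and is closed under addition, \<open>Frob = MN\<close> once \<open>MN = U(Q)\<close>.\<close>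

lemma real_subfield_add: "real_subfield Q \<Longrightarrow> x \<in> Q \<Longrightarrow> y \<in> Q \<Longrightarrow> x + y \<in> Q"
  and real_subfield_mult: "real_subfield Q \<Longrightarrow> x \<in> Q \<Longrightarrow> y \<in> Q \<Longrightarrow> x * y \<in> Q"
  and real_subfield_divide: "real_subfield Q \<Longrightarrow> x \<in> Q \<Longrightarrow> y \<in> Q \<Longrightarrow> x / y \<in> Q"
  by (auto simp: real_subfield_def divide_inverse)

lemma real_subfield_zero: "real_subfield Q \<Longrightarrow> 0 \<in> Q"
  by (simp add: real_subfield_def)

lemma zero_in_Uset: "real_subfield Q \<Longrightarrow> (0, 0) \<in> Uset Q"
  by (simp add: Uset_def real_subfield_zero)

lemma Cset_eq_Uset: "Cset Q = Uset Q"
  by (simp add: Cset_def Uset_def)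

lemma Aset_subset_Uset: "Aset Q \<subseteq> Uset Q"
  by (auto simp: Aset_def Uset_def)

lemma Uset_subset_Rset: "Uset Q \<subseteq> Rset Q"
  by (auto simp: Uset_def Rset_def)

lemma radd_in_Uset:
  "real_subfield Q \<Longrightarrow> x \<in> Uset Q \<Longrightarrow> y \<in> Uset Q \<Longrightarrow> radd x y \<in> Uset Q"
  by (auto simp: Uset_def radd_def real_subfield_add)

lemma rmul_in_Uset:
  "real_subfield Q \<Longrightarrow> x \<in> Uset Q \<Longrightarrow> y \<in> Uset Q \<Longrightarrow> rmul x y \<in> Uset Q"
  by (auto simp: Uset_def rmul_def real_subfield_add real_subfield_mult)

lemma foldr_radd_in_Uset:
  assumes "real_subfield Q" and "set xs \<subseteq> Uset Q"
  shows "foldr radd xs (0, 0) \<in> Uset Q"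
  using assms(2) by (induction xs) (auto simp: zero_in_Uset radd_in_Uset assms(1))

lemma foldr_radd_zeros: "foldr radd (map (\<lambda>_. (0, 0)) xs) (0, 0) = (0, 0)"
  by (induction xs) (simp_all add: radd_def)

lemma MN_subset_Uset:
  assumes Q: "real_subfield Q" and as: "set as \<subseteq> Uset Q"
  shows "MN Q as \<subseteq> Uset Q"
proof
  fix w assume "w \<in> MN Q as"
  then obtain lam where w: "w = foldr radd (map (\<lambda>i. rmul (as ! i) (lam i)) [0..<length as]) (0, 0)"
    and lam: "\<forall>i < length as. lam i \<in> Cset Q"
    unfolding MN_def by blast
  have "rmul (as ! i) (lam i) \<in> Uset Q" if "i < length as" for i
  proof (rule rmul_in_Uset[OF Q])
    show "as ! i \<in> Uset Q"
      using as nth_mem[OF that] by blast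
    show "lam i \<in> Uset Q"
      using lam that by (simp add: Cset_eq_Uset)
  qed
  then show "w \<in> Uset Q"
    unfolding w by (intro foldr_radd_in_Uset[OF Q]) auto
qed

lemma Uset_subset_MN:
  assumes Q: "real_subfield Q" and "as \<noteq> []" and a: "as ! 0 = (a, 0)" "a \<in> Q" "0 < a"
  shows "Uset Q \<subseteq> MN Q as"
proof
  fix w assume "w \<in> Uset Q"
  then obtain x y where w: "w = (x, y)" and xy: "x \<in> Q" "y \<in> Q" "0 \<le> x" "0 \<le> y"
    by (auto simp: Uset_def)
  define lam :: "nat \<Rightarrow> real \<times> real" where
    "lam i = (if i = 0 then (x / a, y / a) else (0, 0))" for i
  have lam: "lam i \<in> Cset Q" for i
    using xy a Q by (auto simp: lam_def Cset_def real_subfield_divide real_subfield_zero)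
  have zeros: "map (\<lambda>i. rmul (as ! i) (lam i)) [1..<length as] = map (\<lambda>_. (0, 0)) [1..<length as]"
    by (simp add: lam_def rmul_def)
  have "foldr radd (map (\<lambda>i. rmul (as ! i) (lam i)) [0..<length as]) (0, 0)
      = radd (rmul (as ! 0) (lam 0)) (foldr radd (map (\<lambda>i. rmul (as ! i) (lam i)) [1..<length as]) (0, 0))"
    using \<open>as \<noteq> []\<close> by (simp add: upt_conv_Cons)
  also have "\<dots> = radd w (0, 0)"
    unfolding zeros foldr_radd_zeros using a by (simp add: lam_def rmul_def w)
  also have "\<dots> = w"
    by (simp add: radd_def w)
  finally show "w \<in> MN Q as"
    unfolding MN_def using lam by blast
qed

lemma Frob_eq_Uset:
  assumes Q: "real_subfield Q" and MN: "MN Q as = Uset Q"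
  shows "Frob Q as = Uset Q"
proof
  show "Frob Q as \<subseteq> Uset Q"
  proof
    fix w assume "w \<in> Frob Q as"
    then have "radd w (0, 0) \<in> Uset Q"
      using zero_in_Uset[OF Q] unfolding Frob_def MN by blast
    then show "w \<in> Uset Q"
      by (simp add: radd_def)
  qed
  show "Uset Q \<subseteq> Frob Q as"
    using Uset_subset_Rset radd_in_Uset[OF Q] unfolding Frob_def MN by blast
qed

theorem proposition4p2:
  fixes Q :: "real set" and as :: "(real \<times> real) list" and n :: nat
  assumes "real_subfield Q"
    and "n > 0" and "length as = n"
    and "set as \<subseteq> Aset Q"
    and "snd (as ! 0) = 0"
  shows "Frob Q as = MN Q as \<and> MN Q as = Uset Q"
proof -
  have "as \<noteq> []"
    using assms(2,3) by auto
  then obtain a where "as ! 0 = (a, 0)" "a \<in> Q" "0 < a"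
    using assms(4,5) nth_mem[of 0 as] by (cases "as ! 0") (auto simp: Aset_def)
  moreover have "set as \<subseteq> Uset Q"
    using assms(4) Aset_subset_Uset by blast
  ultimately have "MN Q as = Uset Q"
    using \<open>as \<noteq> []\<close> by (intro subset_antisym MN_subset_Uset Uset_subset_MN assms(1))
  then show ?thesis
    using Frob_eq_Uset[OF assms(1)] by simp
qed

end
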